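(* Let $(G,\prec)$ be a POP-graph and let $v$ be an internal vertex of $G$ that is minimal, i.e. there is no internal vertex $v'\neq v$ with $v'\to v$. Then (1) $I(v)\subseteq I(G)$ and $I(v)$ is an interval of $(E(G),\prec)$; in particular $I(v)$ is an interval of $(I(G),\prec)$. (2) For every $h\in O(v)$ and $i\in I(G)\setminus I(v)$: $i\prec h$ iff $i\prec\min I(v)$, and $h\prec i$ iff $\max I(v)\prec i$.
   Context: A progressive graph is a finite directed acyclic graph (parallel edges allowed) in which every source and every sink has degree one; degree-one vertices are boundary vertices, the others internal. $I(G)$ is the set of input edges (edges whose initial vertex is a boundary vertex). For a vertex $v$, $I(v)$ and $O(v)$ are its incoming and outgoing edges. For edges write $e\to e'$ if $e\neq e'$ and there is a directed path whose first edge is $e$ and last edge is $e'$; for vertices $v'\to v$ means there is a directed path from $v'$ to $v$. A planar order on $G$ is a linear order $\prec$ on $E(G)$ such that (P1) $e_1\to e_2$ implies $e_1\prec e_2$; (P2) if $e_1\prec e_2\prec e_3$ and $e_1\to e_3$ then $e_1\to e_2$ or $e_2\to e_3$. A POP-graph is a progressive graph with a planar order. An interval of a linearly ordered set $(S,\prec)$ is a subset of the form $\{s: a\preceq s\preceq b\}$. *)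

theory Defs
  imports Main
begin

text \<open>A finite directed graph with parallel edges: vertex set V, edge set E,
  and source/target maps src, tgt on edges.\<close>

definition in_edges :: "'e set \<Rightarrow> ('e \<Rightarrow> 'v) \<Rightarrow> 'v \<Rightarrow> 'e set" where
  "in_edges E tgt v = {e \<in> E. tgt e = v}"

definition out_edges :: "'e set \<Rightarrow> ('e \<Rightarrow> 'v) \<Rightarrow> 'v \<Rightarrow> 'e set" where
  "out_edges E src v = {e \<in> E. src e = v}"

definition degree :: "'e set \<Rightarrow> ('e \<Rightarrow> 'v) \<Rightarrow> ('e \<Rightarrow> 'v) \<Rightarrow> 'v \<Rightarrow> nat" where
  "degree E src tgt v = card (in_edges E tgt v) + card (out_edges E src v)"

definition epath :: "'e set \<Rightarrow> ('e \<Rightarrow> 'v) \<Rightarrow> ('e \<Rightarrow> 'v) \<Rightarrow> 'e list \<Rightarrow> bool" where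
  "epath E src tgt es \<longleftrightarrow> es \<noteq> [] \<and> set es \<subseteq> E \<and>
     (\<forall>i. Suc i < length es \<longrightarrow> tgt (es ! i) = src (es ! Suc i))"

definition dag :: "'v set \<Rightarrow> 'e set \<Rightarrow> ('e \<Rightarrow> 'v) \<Rightarrow> ('e \<Rightarrow> 'v) \<Rightarrow> bool" where
  "dag V E src tgt \<longleftrightarrow> finite V \<and> finite E \<and>
     (\<forall>e\<in>E. src e \<in> V \<and> tgt e \<in> V) \<and>
     (\<forall>es. epath E src tgt es \<longrightarrow> src (hd es) \<noteq> tgt (last es))"

definition progressive :: "'v set \<Rightarrow> 'e set \<Rightarrow> ('e \<Rightarrow> 'v) \<Rightarrow> ('e \<Rightarrow> 'v) \<Rightarrow> bool" where
  "progressive V E src tgt \<longleftrightarrow> dag V E src tgt \<and>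
     (\<forall>v\<in>V. (in_edges E tgt v = {} \<longrightarrow> degree E src tgt v = 1) \<and>
            (out_edges E src v = {} \<longrightarrow> degree E src tgt v = 1))"

definition boundary :: "'v set \<Rightarrow> 'e set \<Rightarrow> ('e \<Rightarrow> 'v) \<Rightarrow> ('e \<Rightarrow> 'v) \<Rightarrow> 'v \<Rightarrow> bool" where
  "boundary V E src tgt v \<longleftrightarrow> v \<in> V \<and> degree E src tgt v = 1"

definition internal :: "'v set \<Rightarrow> 'e set \<Rightarrow> ('e \<Rightarrow> 'v) \<Rightarrow> ('e \<Rightarrow> 'v) \<Rightarrow> 'v \<Rightarrow> bool" where
  "internal V E src tgt v \<longleftrightarrow> v \<in> V \<and> degree E src tgt v \<noteq> 1"

definition input_edges :: "'v set \<Rightarrow> 'e set \<Rightarrow> ('e \<Rightarrow> 'v) \<Rightarrow> ('e \<Rightarrow> 'v) \<Rightarrow> 'e set" where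
  "input_edges V E src tgt = {e \<in> E. boundary V E src tgt (src e)}"

definition edge_reach :: "'e set \<Rightarrow> ('e \<Rightarrow> 'v) \<Rightarrow> ('e \<Rightarrow> 'v) \<Rightarrow> 'e \<Rightarrow> 'e \<Rightarrow> bool" where
  "edge_reach E src tgt e e' \<longleftrightarrow> e \<noteq> e' \<and>
     (\<exists>es. epath E src tgt es \<and> hd es = e \<and> last es = e')"

definition vertex_reach :: "'e set \<Rightarrow> ('e \<Rightarrow> 'v) \<Rightarrow> ('e \<Rightarrow> 'v) \<Rightarrow> 'v \<Rightarrow> 'v \<Rightarrow> bool" where
  "vertex_reach E src tgt v' v \<longleftrightarrow> v' = v \<or>
     (\<exists>es. epath E src tgt es \<and> src (hd es) = v' \<and> tgt (last es) = v)"

definition planar_order :: "'e set \<Rightarrow> ('e \<Rightarrow> 'v) \<Rightarrow> ('e \<Rightarrow> 'v) \<Rightarrow> ('e \<times> 'e) set \<Rightarrow> bool" where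
  "planar_order E src tgt P \<longleftrightarrow> P \<subseteq> E \<times> E \<and> strict_linear_order_on E P \<and>
     (\<forall>e1\<in>E. \<forall>e2\<in>E. edge_reach E src tgt e1 e2 \<longrightarrow> (e1, e2) \<in> P) \<and>
     (\<forall>e1\<in>E. \<forall>e2\<in>E. \<forall>e3\<in>E. (e1, e2) \<in> P \<and> (e2, e3) \<in> P \<and> edge_reach E src tgt e1 e3
        \<longrightarrow> edge_reach E src tgt e1 e2 \<or> edge_reach E src tgt e2 e3)"

definition pop_graph :: "'v set \<Rightarrow> 'e set \<Rightarrow> ('e \<Rightarrow> 'v) \<Rightarrow> ('e \<Rightarrow> 'v) \<Rightarrow> ('e \<times> 'e) set \<Rightarrow> bool" where
  "pop_graph V E src tgt P \<longleftrightarrow> progressive V E src tgt \<and> planar_order E src tgt P"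

definition is_interval :: "'e set \<Rightarrow> ('e \<times> 'e) set \<Rightarrow> 'e set \<Rightarrow> bool" where
  "is_interval A P S \<longleftrightarrow> (\<exists>a\<in>A. \<exists>b\<in>A.
     S = {s \<in> A. (a = s \<or> (a, s) \<in> P) \<and> (s = b \<or> (s, b) \<in> P)})"

definition ord_min :: "('e \<times> 'e) set \<Rightarrow> 'e set \<Rightarrow> 'e" where
  "ord_min P S = (THE a. a \<in> S \<and> (\<forall>b\<in>S. b \<noteq> a \<longrightarrow> (a, b) \<in> P))"

definition ord_max :: "('e \<times> 'e) set \<Rightarrow> 'e set \<Rightarrow> 'e" where
  "ord_max P S = (THE a. a \<in> S \<and> (\<forall>b\<in>S. b \<noteq> a \<longrightarrow> (b, a) \<in> P))"

end

theory Submission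
  imports Defs
begin

text \<open>A path from an edge \<open>s\<close> that is not an
  in-edge of \<open>v\<close> to an out-edge of \<open>v\<close> would run through the internal vertex
  \<open>tgt s \<noteq> v\<close>, which reaches \<open>v\<close>; so no such path exists, and similarly the sources of the
  in-edges of \<open>v\<close> are boundary vertices. By (P1) every in-edge of \<open>v\<close> precedes every
  out-edge \<open>h\<close>. If \<open>s \<notin> I(v)\<close> satisfied \<open>min I(v) \<prec> s \<prec> h\<close>, then (P2) applied to
  \<open>min I(v) \<rightarrow> h\<close> would give a path from \<open>min I(v)\<close> to \<open>s\<close>. Restarting that path at
  \<open>max I(v)\<close> contradicts \<open>s \<prec> max I(v)\<close>, which makes \<open>I(v)\<close> an interval; and if \<open>s\<close> is an
  input edge, its source would have an incoming edge, which proves (2).\<close>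

lemma strict_linear_order_on_converse:
  "strict_linear_order_on A (P\<inverse>) \<longleftrightarrow> strict_linear_order_on A P"
  by (simp add: strict_linear_order_on_def)

lemma strict_linear_order_on_finite_has_least:
  assumes slo: "strict_linear_order_on A P" and "finite S" "S \<subseteq> A" "S \<noteq> {}"
  obtains a where "a \<in> S" "\<forall>b\<in>S. b \<noteq> a \<longrightarrow> (a, b) \<in> P"
proof -
  have "acyclic P"
    using slo by (simp add: strict_linear_order_on_def acyclic_irrefl trancl_id)
  then have wf: "wf (P \<inter> S \<times> S)"
    using \<open>finite S\<close> by (intro finite_acyclic_wf) (auto intro: acyclic_subset)
  obtain x where "x \<in> S" using \<open>S \<noteq> {}\<close> by blast
  then obtain a where a: "a \<in> S" and no_below: "\<And>b. (b, a) \<in> P \<inter> S \<times> S \<Longrightarrow> b \<notin> S"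
    using wfE_min[OF wf] by blast
  have "(a, b) \<in> P" if "b \<in> S" "b \<noteq> a" for b
  proof -
    have "(a, b) \<in> P \<or> (b, a) \<in> P"
      using slo \<open>S \<subseteq> A\<close> a that unfolding strict_linear_order_on_def total_on_def by blast
    with no_below a that show ?thesis by blast
  qed
  then have "\<forall>b\<in>S. b \<noteq> a \<longrightarrow> (a, b) \<in> P" by blast
  with a show thesis by (rule that)
qed

lemma ord_min_eqI:
  assumes slo: "strict_linear_order_on A P"
    and "a \<in> S" "\<forall>b\<in>S. b \<noteq> a \<longrightarrow> (a, b) \<in> P"
  shows "ord_min P S = a"
  unfolding ord_min_def
proof (rule the_equality)
  fix a' assume a': "a' \<in> S \<and> (\<forall>b\<in>S. b \<noteq> a' \<longrightarrow> (a', b) \<in> P)"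
  show "a' = a"
  proof (rule ccontr)
    assume "a' \<noteq> a"
    with a' assms have "(a, a') \<in> P" "(a', a) \<in> P" by auto
    with slo show False by (auto simp: strict_linear_order_on_def irrefl_def dest: transD)
  qed
qed (use assms in blast)

lemma ord_min_least:
  assumes slo: "strict_linear_order_on A P" and "finite S" "S \<subseteq> A" "S \<noteq> {}"
  shows "ord_min P S \<in> S" and "\<And>b. b \<in> S \<Longrightarrow> b \<noteq> ord_min P S \<Longrightarrow> (ord_min P S, b) \<in> P"
proof -
  obtain a where a: "a \<in> S" "\<forall>b\<in>S. b \<noteq> a \<longrightarrow> (a, b) \<in> P"
    using strict_linear_order_on_finite_has_least[OF assms] .
  moreover have "ord_min P S = a" using ord_min_eqI[OF slo a] .
  ultimately show "ord_min P S \<in> S" "\<And>b. b \<in> S \<Longrightarrow> b \<noteq> ord_min P S \<Longrightarrow> (ord_min P S, b) \<in> P"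
    by simp_all
qed

lemma ord_max_eq_ord_min_converse: "ord_max P S = ord_min (P\<inverse>) S"
  by (simp add: ord_max_def ord_min_def)

lemma ord_max_greatest:
  assumes slo: "strict_linear_order_on A P" and "finite S" "S \<subseteq> A" "S \<noteq> {}"
  shows "ord_max P S \<in> S" and "\<And>b. b \<in> S \<Longrightarrow> b \<noteq> ord_max P S \<Longrightarrow> (b, ord_max P S) \<in> P"
proof -
  have "strict_linear_order_on A (P\<inverse>)"
    using slo by (simp add: strict_linear_order_on_converse)
  from ord_min_least[OF this assms(2-4)]
  show "ord_max P S \<in> S" "\<And>b. b \<in> S \<Longrightarrow> b \<noteq> ord_max P S \<Longrightarrow> (b, ord_max P S) \<in> P"
    by (simp_all add: ord_max_eq_ord_min_converse)
qed

lemma epath_Cons: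
  "epath E src tgt (e # es) \<longleftrightarrow>
     e \<in> E \<and> (es = [] \<or> epath E src tgt es \<and> tgt e = src (hd es))"
  by (auto simp: epath_def nth_Cons hd_conv_nth split: nat.splits)

lemma epath_snoc:
  "epath E src tgt (es @ [e]) \<longleftrightarrow>
     e \<in> E \<and> (es = [] \<or> epath E src tgt es \<and> tgt (last es) = src e)"
  by (induction es) (auto simp: epath_Cons)

lemma edge_reachE:
  assumes "edge_reach E src tgt e e'"
  obtains ms where "epath E src tgt (e # ms @ [e'])"
proof -
  obtain es where es: "epath E src tgt es" "hd es = e" "last es = e'" and "e \<noteq> e'"
    using assms by (auto simp: edge_reach_def)
  from es(1,2) obtain rest where es_eq: "es = e # rest"
    by (cases es) (auto simp: epath_def)
  with es(3) \<open>e \<noteq> e'\<close> have "rest \<noteq> []" "last rest = e'" by auto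
  then have "rest = butlast rest @ [e']" by (metis append_butlast_last_id)
  with es(1) es_eq have "epath E src tgt (e # butlast rest @ [e'])" by metis
  then show thesis by (rule that)
qed

lemma edge_reach_vertex_reach:
  assumes "edge_reach E src tgt e e'"
  shows "vertex_reach E src tgt (tgt e) (src e')"
proof -
  obtain ms where p: "epath E src tgt (e # ms @ [e'])"
    using assms by (rule edge_reachE)
  show ?thesis
  proof (cases "ms = []")
    case True
    with p show ?thesis by (simp add: vertex_reach_def epath_Cons)
  next
    case False
    with p have "epath E src tgt ms" "src (hd ms) = tgt e" "tgt (last ms) = src e'"
      by (auto simp: epath_Cons epath_snoc)
    then show ?thesis by (auto simp: vertex_reach_def)
  qed
qed

lemma edge_reach_Cons:
  assumes "edge_reach E src tgt e e'" "d \<in> E" "tgt d = tgt e" "d \<noteq> e'"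
  shows "edge_reach E src tgt d e'"
proof -
  obtain ms where "epath E src tgt (e # ms @ [e'])"
    using assms(1) by (rule edge_reachE)
  with assms(2,3) have "epath E src tgt (d # ms @ [e'])"
    by (simp add: epath_Cons)
  with assms(4) show ?thesis
    unfolding edge_reach_def by (metis last_ConsR last_snoc list.sel(1) snoc_eq_iff_butlast)
qed

lemma degree_neq_1_if_in_and_out_edge:
  assumes "finite E" "a \<in> E" "b \<in> E" "tgt a = w" "src b = w"
  shows "degree E src tgt w \<noteq> 1"
proof -
  have "card (in_edges E tgt w) > 0" "card (out_edges E src w) > 0"
    using assms by (auto simp: in_edges_def out_edges_def card_gt_0_iff)
  then show ?thesis by (simp add: degree_def)
qed

lemma edge_reach_degree_tgt:
  assumes "finite E" "edge_reach E src tgt e e'"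
  shows "degree E src tgt (tgt e) \<noteq> 1"
proof -
  obtain ms where "epath E src tgt (e # ms @ [e'])"
    using assms(2) by (rule edge_reachE)
  then have e: "e \<in> E" and rest: "epath E src tgt (ms @ [e'])"
    and link: "src (hd (ms @ [e'])) = tgt e"
    by (simp_all add: epath_Cons)
  from rest have "hd (ms @ [e']) \<in> E"
    unfolding epath_def by (metis hd_in_set subsetD)
  from degree_neq_1_if_in_and_out_edge[where src = src and tgt = tgt, OF assms(1) e this refl link]
  show ?thesis .
qed

lemma edge_reach_degree_src:
  assumes "finite E" "edge_reach E src tgt e e'"
  shows "degree E src tgt (src e') \<noteq> 1"
proof -
  obtain ms where "epath E src tgt (e # ms @ [e'])"
    using assms(2) by (rule edge_reachE)
  then have "epath E src tgt ((e # ms) @ [e'])" by simp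
  then have e': "e' \<in> E" and init: "epath E src tgt (e # ms)"
    and link: "tgt (last (e # ms)) = src e'"
    by (simp_all only: epath_snoc) simp_all
  from init have "last (e # ms) \<in> E"
    unfolding epath_def by (metis last_in_set list.distinct(1) subsetD)
  from degree_neq_1_if_in_and_out_edge[where src = src and tgt = tgt, OF assms(1) this e' link refl]
  show ?thesis .
qed

lemma input_edge_not_reached:
  assumes "finite E" "i \<in> input_edges V E src tgt"
  shows "\<not> edge_reach E src tgt e i"
  using assms edge_reach_degree_src[of E src tgt e i]
  by (auto simp: input_edges_def boundary_def)

lemma dag_src_neq_tgt:
  assumes "dag V E src tgt" "e \<in> E"
  shows "src e \<noteq> tgt e"
  using assms by (auto simp: dag_def epath_Cons dest: spec[of _ "[e]"])

lemma dag_edge_reach_adjacent: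
  assumes "dag V E src tgt" "d \<in> E" "e \<in> E" "tgt d = src e"
  shows "edge_reach E src tgt d e"
proof -
  have "d \<noteq> e" using assms dag_src_neq_tgt by metis
  moreover have "epath E src tgt [d, e]" using assms by (simp add: epath_Cons)
  ultimately show ?thesis unfolding edge_reach_def by force
qed

lemma vertex_reach_edge:
  assumes "e \<in> E"
  shows "vertex_reach E src tgt (src e) (tgt e)"
proof -
  have "epath E src tgt [e]" using assms by (simp add: epath_Cons)
  then show ?thesis unfolding vertex_reach_def by force
qed

definition minimal_internal :: "'v set \<Rightarrow> 'e set \<Rightarrow> ('e \<Rightarrow> 'v) \<Rightarrow> ('e \<Rightarrow> 'v) \<Rightarrow> 'v \<Rightarrow> bool" where
  "minimal_internal V E src tgt v \<longleftrightarrow> internal V E src tgt v \<and>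
     (\<forall>v'. internal V E src tgt v' \<and> v' \<noteq> v \<longrightarrow> \<not> vertex_reach E src tgt v' v)"

locale pop_graph_minimal_vertex =
  fixes V :: "'v set" and E :: "'e set" and src tgt :: "'e \<Rightarrow> 'v"
    and P :: "('e \<times> 'e) set" and v :: 'v
  assumes pop: "pop_graph V E src tgt P"
    and minimal: "minimal_internal V E src tgt v"
begin

abbreviation min_in :: 'e where "min_in \<equiv> ord_min P (in_edges E tgt v)"
abbreviation max_in :: 'e where "max_in \<equiv> ord_max P (in_edges E tgt v)"

lemma dag: "dag V E src tgt"
  using pop by (simp add: pop_graph_def progressive_def)

lemma finite_edges: "finite E"
  using dag by (simp add: dag_def)

lemma strict_linear_order: "strict_linear_order_on E P"
  using pop by (simp add: pop_graph_def planar_order_def)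

lemma less_trans: "(x, y) \<in> P \<Longrightarrow> (y, z) \<in> P \<Longrightarrow> (x, z) \<in> P"
  using strict_linear_order by (auto simp: strict_linear_order_on_def dest: transD)

lemma less_asym: "(x, y) \<in> P \<Longrightarrow> (y, x) \<notin> P"
  using strict_linear_order less_trans by (fastforce simp: strict_linear_order_on_def irrefl_def)

lemma less_total: "x \<in> E \<Longrightarrow> y \<in> E \<Longrightarrow> x \<noteq> y \<Longrightarrow> (x, y) \<in> P \<or> (y, x) \<in> P"
  using strict_linear_order by (auto simp: strict_linear_order_on_def total_on_def)

lemma edge_reach_less: "e \<in> E \<Longrightarrow> e' \<in> E \<Longrightarrow> edge_reach E src tgt e e' \<Longrightarrow> (e, e') \<in> P"
  using pop by (simp add: pop_graph_def planar_order_def)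

lemma edge_reach_split_at_between:
  "\<lbrakk>e1 \<in> E; e2 \<in> E; e3 \<in> E; (e1, e2) \<in> P; (e2, e3) \<in> P; edge_reach E src tgt e1 e3\<rbrakk>
    \<Longrightarrow> edge_reach E src tgt e1 e2 \<or> edge_reach E src tgt e2 e3"
  using pop unfolding pop_graph_def planar_order_def by blast

lemma in_edges_subset_edges: "in_edges E tgt v \<subseteq> E"
  by (auto simp: in_edges_def)

lemma in_edges_nonempty: "in_edges E tgt v \<noteq> {}"
  and out_edges_nonempty: "out_edges E src v \<noteq> {}"
  using pop minimal
  by (auto simp: pop_graph_def progressive_def minimal_internal_def internal_def)

lemma in_edges_subset_input_edges: "in_edges E tgt v \<subseteq> input_edges V E src tgt"
proof
  fix e assume e: "e \<in> in_edges E tgt v"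
  then have "e \<in> E" "tgt e = v" by (auto simp: in_edges_def)
  then have "src e \<noteq> v" "vertex_reach E src tgt (src e) v" "src e \<in> V"
    using dag_src_neq_tgt[OF dag] vertex_reach_edge dag by (auto simp: dag_def)
  with minimal have "boundary V E src tgt (src e)"
    by (auto simp: minimal_internal_def internal_def boundary_def)
  with \<open>e \<in> E\<close> show "e \<in> input_edges V E src tgt"
    by (simp add: input_edges_def)
qed

lemma not_edge_reach_out_edge:
  assumes "s \<in> E" "s \<notin> in_edges E tgt v" "h \<in> out_edges E src v"
  shows "\<not> edge_reach E src tgt s h"
proof
  assume reach: "edge_reach E src tgt s h"
  have "vertex_reach E src tgt (tgt s) v"
    using edge_reach_vertex_reach[OF reach] assms(3) by (simp add: out_edges_def)
  moreover have "internal V E src tgt (tgt s)"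
    using edge_reach_degree_tgt[OF finite_edges reach] dag assms(1)
    by (auto simp: internal_def dag_def)
  moreover have "tgt s \<noteq> v"
    using assms(1,2) by (simp add: in_edges_def)
  ultimately show False
    using minimal by (auto simp: minimal_internal_def)
qed

lemma in_edge_less_out_edge:
  assumes "a \<in> in_edges E tgt v" "h \<in> out_edges E src v"
  shows "(a, h) \<in> P"
  using assms dag_edge_reach_adjacent[OF dag, of a h] edge_reach_less
  by (simp add: in_edges_def out_edges_def)

lemma edge_reach_from_in_edge_if_between:
  assumes "a \<in> in_edges E tgt v" "h \<in> out_edges E src v"
    and "s \<in> E" "s \<notin> in_edges E tgt v" "(a, s) \<in> P" "(s, h) \<in> P"
  shows "edge_reach E src tgt a s"
proof -
  have "a \<in> E" "h \<in> E" "edge_reach E src tgt a h"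
    using assms(1,2) dag_edge_reach_adjacent[OF dag, of a h]
    by (auto simp: in_edges_def out_edges_def)
  then show ?thesis
    using edge_reach_split_at_between[of a s h] not_edge_reach_out_edge assms by blast
qed

lemma min_in: "min_in \<in> in_edges E tgt v"
  "\<And>b. b \<in> in_edges E tgt v \<Longrightarrow> b \<noteq> min_in \<Longrightarrow> (min_in, b) \<in> P"
  using ord_min_least[OF strict_linear_order _ in_edges_subset_edges in_edges_nonempty]
    finite_subset[OF in_edges_subset_edges finite_edges] by blast+

lemma max_in: "max_in \<in> in_edges E tgt v"
  "\<And>b. b \<in> in_edges E tgt v \<Longrightarrow> b \<noteq> max_in \<Longrightarrow> (b, max_in) \<in> P"
  using ord_max_greatest[OF strict_linear_order _ in_edges_subset_edges in_edges_nonempty]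
    finite_subset[OF in_edges_subset_edges finite_edges] by blast+

lemma in_edges_eq_interval:
  "in_edges E tgt v =
     {s \<in> E. (min_in = s \<or> (min_in, s) \<in> P) \<and> (s = max_in \<or> (s, max_in) \<in> P)}"
proof (intro equalityI subsetI)
  fix s assume "s \<in> in_edges E tgt v"
  then show "s \<in> {s \<in> E. (min_in = s \<or> (min_in, s) \<in> P) \<and> (s = max_in \<or> (s, max_in) \<in> P)}"
    using min_in max_in in_edges_subset_edges by blast
next
  fix s assume "s \<in> {s \<in> E. (min_in = s \<or> (min_in, s) \<in> P) \<and> (s = max_in \<or> (s, max_in) \<in> P)}"
  then have s: "s \<in> E" "min_in = s \<or> (min_in, s) \<in> P" "s = max_in \<or> (s, max_in) \<in> P"
    by blast+
  show "s \<in> in_edges E tgt v"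
  proof (rule ccontr)
    assume out: "s \<notin> in_edges E tgt v"
    obtain h where h: "h \<in> out_edges E src v" using out_edges_nonempty by blast
    have "(min_in, s) \<in> P" "(s, max_in) \<in> P" using s out min_in(1) max_in(1) by auto
    moreover have "(s, h) \<in> P"
      using less_trans calculation(2) in_edge_less_out_edge[OF max_in(1) h] .
    ultimately have "edge_reach E src tgt min_in s"
      using edge_reach_from_in_edge_if_between[OF min_in(1) h s(1) out] by blast
    then have "edge_reach E src tgt max_in s"
      using edge_reach_Cons max_in(1) min_in(1) out by (fastforce simp: in_edges_def)
    then have "(max_in, s) \<in> P"
      using edge_reach_less max_in(1) in_edges_subset_edges s(1) by blast
    with \<open>(s, max_in) \<in> P\<close> show False by (blast dest: less_asym)
  qed
qed

lemma in_edges_is_interval: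
  "is_interval E P (in_edges E tgt v)"
  "is_interval (input_edges V E src tgt) P (in_edges E tgt v)"
  using in_edges_eq_interval min_in(1) max_in(1) in_edges_subset_input_edges
    in_edges_subset_edges
  unfolding is_interval_def input_edges_def by blast+

lemma input_edge_less_out_edge_iff:
  assumes h: "h \<in> out_edges E src v" and i: "i \<in> input_edges V E src tgt - in_edges E tgt v"
  shows "(i, h) \<in> P \<longleftrightarrow> (i, min_in) \<in> P"
proof
  assume ih: "(i, h) \<in> P"
  have "i \<in> E" using i by (simp add: input_edges_def)
  show "(i, min_in) \<in> P"
  proof (rule ccontr)
    assume "(i, min_in) \<notin> P"
    then have "(min_in, i) \<in> P"
      using less_total \<open>i \<in> E\<close> min_in(1) in_edges_subset_edges i by blast
    then have "edge_reach E src tgt min_in i"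
      using edge_reach_from_in_edge_if_between[OF min_in(1) h] \<open>i \<in> E\<close> i ih by blast
    then show False using input_edge_not_reached[OF finite_edges] i by blast
  qed
next
  assume "(i, min_in) \<in> P"
  then show "(i, h) \<in> P" using less_trans in_edge_less_out_edge[OF min_in(1) h] by blast
qed

lemma out_edge_less_input_edge_iff:
  assumes h: "h \<in> out_edges E src v" and i: "i \<in> input_edges V E src tgt - in_edges E tgt v"
  shows "(h, i) \<in> P \<longleftrightarrow> (max_in, i) \<in> P"
proof
  assume "(h, i) \<in> P"
  then show "(max_in, i) \<in> P" using less_trans in_edge_less_out_edge[OF max_in(1) h] by blast
next
  assume max_i: "(max_in, i) \<in> P"
  show "(h, i) \<in> P"
  proof (rule ccontr)
    assume "(h, i) \<notin> P"
    moreover have "i \<noteq> h" \<comment> \<open>\<open>src i\<close> is a boundary vertex, \<open>src h = v\<close> is internal\<close>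
      using h i minimal
      by (auto simp: input_edges_def out_edges_def minimal_internal_def internal_def boundary_def)
    ultimately have "(i, h) \<in> P"
      using less_total h i by (auto simp: input_edges_def out_edges_def)
    then have "(i, min_in) \<in> P" using input_edge_less_out_edge_iff[OF h i] by blast
    moreover have "(min_in, i) \<in> P"
      using max_i less_trans max_in(2)[OF min_in(1)] by (cases "min_in = max_in") auto
    ultimately show False by (blast dest: less_asym)
  qed
qed

end

theorem lemma3p5:
  fixes V :: "'v set" and E :: "'e set" and src tgt :: "'e \<Rightarrow> 'v"
    and P :: "('e \<times> 'e) set" and v :: 'v
  assumes pop: "pop_graph V E src tgt P"
    and int: "internal V E src tgt v"
    and minimal: "\<forall>v'. internal V E src tgt v' \<and> v' \<noteq> v \<longrightarrow> \<not> vertex_reach E src tgt v' v"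
  shows "in_edges E tgt v \<subseteq> input_edges V E src tgt
       \<and> is_interval E P (in_edges E tgt v)
       \<and> is_interval (input_edges V E src tgt) P (in_edges E tgt v)
       \<and> (\<forall>h \<in> out_edges E src v. \<forall>i \<in> input_edges V E src tgt - in_edges E tgt v.
           ((i, h) \<in> P \<longleftrightarrow> (i, ord_min P (in_edges E tgt v)) \<in> P) \<and>
           ((h, i) \<in> P \<longleftrightarrow> (ord_max P (in_edges E tgt v), i) \<in> P))"
proof -
  interpret pop_graph_minimal_vertex V E src tgt P v
    using pop int minimal by unfold_locales (simp_all add: minimal_internal_def)
  show ?thesis
    using in_edges_subset_input_edges in_edges_is_interval
      input_edge_less_out_edge_iff out_edge_less_input_edge_iff
    by blast
qed

end
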